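(* Let $s\ge2$ and let $r>0$ satisfy $r\ge s+2$ and $\|u\|^2+\|w\|^2\le r$ for all $u\in\mathbb R^{s+1}$ with $u_1=1$, $\|(u_2,\dots,u_{s+1})\|_2\le1$ and all extreme points $w$ of $\{w\in\mathbb R^{2s}:w\ge0,B^Tw=d\}$. Define \[ Z:=\frac14\Big[\begin{pmatrix}2e_1\\ \mathbb 1_{2s}\end{pmatrix}\begin{pmatrix}2e_1\\ \mathbb 1_{2s}\end{pmatrix}^T+\sum_{i=1}^s\begin{pmatrix}\tfrac{2}{\sqrt s}e_{i+1}\\ f_{2i-1}-f_{2i}\end{pmatrix}\begin{pmatrix}\tfrac{2}{\sqrt s}e_{i+1}\\ f_{2i-1}-f_{2i}\end{pmatrix}^T\Big]\in\mathcal S^{3s+1}. \] Then $Z$ is an optimal solution of the problem \[ \max\ F\bullet Z_{21}\ \ \text{s.t.}\ \ \mathrm{diag}(EZE^T)=0,\ I\bullet Z\le r,\ J\bullet Z_{11}\ge0,\ Z_{11}e_1\in\widehat{\mathcal U}_2,\ Z_{22}\ge0,\ \text{each row of }Z_{21}\in\widehat{\mathcal U}_2,\ Z\succeq0,\ g_1g_1^T\bullet Z=1, \] and its objective value is $F\bullet Z_{21}=\tfrac12(\sqrt s+s)$.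
   Context: $k=s+1$, $m=2s$. $e_1,\dots,e_{s+1}$ standard basis of $\mathbb R^{s+1}$; $f_1,\dots,f_{2s}$ standard basis of $\mathbb R^{2s}$; $\epsilon_j$ standard basis of $\mathbb R^s$; $\mathbb 1_{2s}$ all-ones vector; $g_1=(e_1;0)\in\mathbb R^{3s+1}$. $d:=\epsilon_s$. $B\in\mathbb R^{2s\times s}$: rows $2i-1$ and $2i$ both equal $\epsilon_1^T$ for $i=1$ and both equal $-\epsilon_{i-1}^T+\epsilon_i^T$ for $i=2,\dots,s$. $F\in\mathbb R^{2s\times(s+1)}$: row $2i-1$ is $\tfrac12(e_1+e_{i+1})^T$, row $2i$ is $\tfrac12(e_1-e_{i+1})^T$. $E:=\begin{pmatrix}-de_1^T&B^T\end{pmatrix}$. $J:=\mathrm{Diag}(1,-1,\dots,-1)\in\mathcal S^{s+1}$. $\widehat{\mathcal U}_2:=\{u\in\mathbb R^{s+1}:\|(u_2,\dots,u_{s+1})\|_2\le u_1\}$. $Z$ is partitioned as $\begin{pmatrix}Z_{11}&Z_{21}^T\\Z_{21}&Z_{22}\end{pmatrix}$ with $Z_{11}\in\mathcal S^{s+1}$, $Z_{21}\in\mathbb R^{2s\times(s+1)}$, $Z_{22}\in\mathcal S^{2s}$. $A\bullet B:=\mathrm{trace}(A^TB)$; $\mathrm{diag}(\cdot)$ is the vector of diagonal entries; $Z_{22}\ge0$ is entrywise. *)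

theory Defs
  imports "HOL-Analysis.Analysis"
begin

text \<open>Conventions: vectors in R^n are functions nat => real, indexed 1..n;
matrices in R^(m x n) are functions nat => nat => real, indexed 1..m, 1..n.
Entries outside these ranges are irrelevant (never referenced).\<close>

definition ev :: "nat \<Rightarrow> nat \<Rightarrow> real" where
  "ev i k = (if k = i then 1 else 0)"

definition ones :: "nat \<Rightarrow> real" where "ones k = 1"

definition vstack :: "nat \<Rightarrow> (nat \<Rightarrow> real) \<Rightarrow> (nat \<Rightarrow> real) \<Rightarrow> nat \<Rightarrow> real" where
  "vstack p x y k = (if k \<le> p then x k else y (k - p))"

definition outer :: "(nat \<Rightarrow> real) \<Rightarrow> nat \<Rightarrow> nat \<Rightarrow> real" where
  "outer a i j = a i * a j"

definition frob :: "nat \<Rightarrow> nat \<Rightarrow> (nat \<Rightarrow> nat \<Rightarrow> real) \<Rightarrow> (nat \<Rightarrow> nat \<Rightarrow> real) \<Rightarrow> real" where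
  "frob m n X Y = (\<Sum>i=1..m. \<Sum>j=1..n. X i j * Y i j)"

definition symmetric_mat :: "nat \<Rightarrow> (nat \<Rightarrow> nat \<Rightarrow> real) \<Rightarrow> bool" where
  "symmetric_mat n Z \<longleftrightarrow> (\<forall>i\<in>{1..n}. \<forall>j\<in>{1..n}. Z i j = Z j i)"

definition psd :: "nat \<Rightarrow> (nat \<Rightarrow> nat \<Rightarrow> real) \<Rightarrow> bool" where
  "psd n Z \<longleftrightarrow> symmetric_mat n Z \<and>
     (\<forall>x::nat \<Rightarrow> real. (\<Sum>i=1..n. \<Sum>j=1..n. x i * Z i j * x j) \<ge> 0)"

definition Uhat2 :: "nat \<Rightarrow> (nat \<Rightarrow> real) set" where
  "Uhat2 s = {u. sqrt (\<Sum>i\<in>{2..s+1}. (u i)\<^sup>2) \<le> u 1}"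

definition extreme_pt :: "(nat \<Rightarrow> real) set \<Rightarrow> (nat \<Rightarrow> real) \<Rightarrow> bool" where
  "extreme_pt P w \<longleftrightarrow> w \<in> P \<and>
     \<not> (\<exists>u\<in>P. \<exists>v\<in>P. u \<noteq> v \<and> (\<exists>t. 0 < t \<and> t < 1 \<and> w = (\<lambda>k. t * u k + (1 - t) * v k)))"

definition dvec :: "nat \<Rightarrow> nat \<Rightarrow> real" where "dvec s = ev s"

text \<open>B in R^(2s x s): rows 2i-1, 2i equal eps_1^T for i=1, and -eps_(i-1)^T + eps_i^T for i=2..s.\<close>
definition Bmat :: "nat \<Rightarrow> nat \<Rightarrow> nat \<Rightarrow> real" where
  "Bmat s r c = (let i = (r + 1) div 2 in
      if i = 1 then ev 1 c else - ev (i - 1) c + ev i c)"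

text \<open>F in R^(2s x (s+1)): row 2i-1 is (e_1+e_(i+1))^T/2, row 2i is (e_1-e_(i+1))^T/2.\<close>
definition Fmat :: "nat \<Rightarrow> nat \<Rightarrow> nat \<Rightarrow> real" where
  "Fmat s r c = (let i = (r + 1) div 2 in
      if odd r then (ev 1 c + ev (i + 1) c) / 2 else (ev 1 c - ev (i + 1) c) / 2)"

text \<open>E = ( -d e_1^T   B^T ) in R^(s x (3s+1)).\<close>
definition Emat :: "nat \<Rightarrow> nat \<Rightarrow> nat \<Rightarrow> real" where
  "Emat s i k = (if k \<le> s + 1 then - dvec s i * ev 1 k else Bmat s (k - (s + 1)) i)"

definition Z11 :: "nat \<Rightarrow> (nat \<Rightarrow> nat \<Rightarrow> real) \<Rightarrow> nat \<Rightarrow> nat \<Rightarrow> real" where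
  "Z11 s Z i j = Z i j"
definition Z21 :: "nat \<Rightarrow> (nat \<Rightarrow> nat \<Rightarrow> real) \<Rightarrow> nat \<Rightarrow> nat \<Rightarrow> real" where
  "Z21 s Z i j = Z (s + 1 + i) j"
definition Z22 :: "nat \<Rightarrow> (nat \<Rightarrow> nat \<Rightarrow> real) \<Rightarrow> nat \<Rightarrow> nat \<Rightarrow> real" where
  "Z22 s Z i j = Z (s + 1 + i) (s + 1 + j)"

definition Jmat :: "nat \<Rightarrow> nat \<Rightarrow> real" where
  "Jmat i j = (if i = j then (if i = 1 then 1 else -1) else 0)"

definition Imat :: "nat \<Rightarrow> nat \<Rightarrow> real" where
  "Imat i j = (if i = j then 1 else 0)"

definition g1 :: "nat \<Rightarrow> nat \<Rightarrow> real" where "g1 s = vstack (s + 1) (ev 1) (\<lambda>_. 0)"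

definition EZEt_diag :: "nat \<Rightarrow> (nat \<Rightarrow> nat \<Rightarrow> real) \<Rightarrow> nat \<Rightarrow> real" where
  "EZEt_diag s Z i = (\<Sum>k\<in>{1..3 * s + 1}. \<Sum>l\<in>{1..3 * s + 1}. Emat s i k * Z k l * Emat s i l)"

definition objective :: "nat \<Rightarrow> (nat \<Rightarrow> nat \<Rightarrow> real) \<Rightarrow> real" where
  "objective s Z = frob (2 * s) (s+1) (Fmat s) (Z21 s Z)"

definition feasible :: "nat \<Rightarrow> real \<Rightarrow> (nat \<Rightarrow> nat \<Rightarrow> real) \<Rightarrow> bool" where
  "feasible s r Z \<longleftrightarrow>
     symmetric_mat (3 * s + 1) Z \<and>
     (\<forall>i\<in>{1..s}. EZEt_diag s Z i = 0) \<and>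
     frob (3 * s + 1) (3 * s + 1) Imat Z \<le> r \<and>
     frob (s+1) (s+1) Jmat (Z11 s Z) \<ge> 0 \<and>
     (\<lambda>i. Z11 s Z i 1) \<in> Uhat2 s \<and>
     (\<forall>i\<in>{1..2 * s}. \<forall>j\<in>{1..2 * s}. Z22 s Z i j \<ge> 0) \<and>
     (\<forall>i\<in>{1..2 * s}. (\<lambda>j. Z21 s Z i j) \<in> Uhat2 s) \<and>
     psd (3 * s + 1) Z \<and>
     frob (3 * s + 1) (3 * s + 1) (outer (g1 s)) Z = 1"

definition optimal :: "nat \<Rightarrow> real \<Rightarrow> (nat \<Rightarrow> nat \<Rightarrow> real) \<Rightarrow> bool" where
  "optimal s r Z \<longleftrightarrow> feasible s r Z \<and> (\<forall>Z'. feasible s r Z' \<longrightarrow> objective s Z' \<le> objective s Z)"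

definition Wpoly :: "nat \<Rightarrow> (nat \<Rightarrow> real) set" where
  "Wpoly s = {w. (\<forall>k. k \<notin> {1..2 * s} \<longrightarrow> w k = 0) \<and> (\<forall>j\<in>{1..2 * s}. w j \<ge> 0) \<and>
                 (\<forall>i\<in>{1..s}. (\<Sum>j\<in>{1..2 * s}. Bmat s j i * w j) = dvec s i)}"

definition avec :: "nat \<Rightarrow> nat \<Rightarrow> real" where
  "avec s = vstack (s + 1) (\<lambda>k. 2 * ev 1 k) ones"
definition bvec :: "nat \<Rightarrow> nat \<Rightarrow> nat \<Rightarrow> real" where
  "bvec s i = vstack (s + 1) (\<lambda>k. 2 / sqrt (real s) * ev (i + 1) k) (\<lambda>k. ev (2 * i - 1) k - ev (2 * i) k)"
definition Zopt :: "nat \<Rightarrow> nat \<Rightarrow> nat \<Rightarrow> real" where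
  "Zopt s k l = (1/4) * (outer (avec s) k l + (\<Sum>i=1..s. outer (bvec s i) k l))"

end

theory Submission
  imports Defs
begin

text \<open>Upper bound: for feasible \<open>Z\<close>, \<open>Z \<succeq> 0\<close> and \<open>diag(EZE\<^sup>T) = 0\<close> give \<open>ZE\<^sup>T = 0\<close>; since \<open>E\<close>
telescopes along the pairs of rows of \<open>B\<close>, this says that every pair of columns \<open>s+2i, s+2i+1\<close>
of \<open>Z\<close> sums to its first column. Testing \<open>Z \<succeq> 0\<close> against \<open>f\<^sub>2\<^sub>i\<^sub>-\<^sub>1 - f\<^sub>2\<^sub>i - \<surd>s e\<^sub>i\<^sub>+\<^sub>1\<close> and using
\<open>Z\<^sub>2\<^sub>2 \<ge> 0\<close> then bounds the \<open>i\<close>-th contribution to the objective by \<open>(1 + s Z\<^sub>i\<^sub>+\<^sub>1\<^sub>,\<^sub>i\<^sub>+\<^sub>1)/(2\<surd>s)\<close>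
beyond \<open>1/2\<close>, and \<open>J \<bullet> Z\<^sub>1\<^sub>1 \<ge> 0\<close> caps \<open>\<Sum> Z\<^sub>i\<^sub>+\<^sub>1\<^sub>,\<^sub>i\<^sub>+\<^sub>1\<close> by \<open>Z\<^sub>1\<^sub>1 = 1\<close>.
Attainment: \<open>Zopt\<close> is a Gram matrix of vectors annihilated by \<open>E\<close>, so it is feasible once
\<open>r \<ge> s + 2 = trace Zopt\<close>.\<close>

lemma sum_cl_ivl_add_split:
  "(\<Sum>k\<in>{1..p+q}. f k) = (\<Sum>k\<in>{1..p}. f k) + (\<Sum>r\<in>{1..q}. f (p+r))" for p q :: nat
  by (induction q) (auto simp: ac_simps)

lemma sum_cl_ivl_pairs:
  "(\<Sum>r\<in>{1..2 * s}. f r) = (\<Sum>i\<in>{1..s}. f (2 * i - 1) + f (2 * i))" for s :: nat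
proof (induction s)
  case 0 then show ?case by simp
next
  case (Suc s)
  have "{1..2 * Suc s} = insert (2 * s + 2) (insert (2 * s + 1) {1..2 * s})" by auto
  then show ?case using Suc by (simp add: ac_simps)
qed

lemma sum_ev_mult: "finite A \<Longrightarrow> p \<in> A \<Longrightarrow> (\<Sum>k\<in>A. ev p k * f k) = f p"
proof -
  assume "finite A" "p \<in> A"
  have "(\<Sum>k\<in>A. ev p k * f k) = (\<Sum>k\<in>A. if k = p then f k else 0)"
    by (rule sum.cong) (auto simp: ev_def)
  then show ?thesis using \<open>finite A\<close> \<open>p \<in> A\<close> by simp
qed

lemma sum_mult_ev: "finite A \<Longrightarrow> p \<in> A \<Longrightarrow> (\<Sum>k\<in>A. f k * ev p k) = f p"
  using sum_ev_mult[of A p f] by (simp add: mult.commute)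

lemma sum_mult_ev_diff_ev_diff:
  assumes "finite A" "p \<in> A" "q \<in> A" "m \<in> A"
  shows "(\<Sum>j\<in>A. f j * (ev p j - ev q j - t * ev m j)) = f p - f q - t * f m"
proof -
  have "(\<Sum>j\<in>A. f j * (ev p j - ev q j - t * ev m j)) =
     (\<Sum>j\<in>A. f j * ev p j) - (\<Sum>j\<in>A. f j * ev q j) - t * (\<Sum>j\<in>A. f j * ev m j)"
    by (simp add: right_diff_distrib sum_subtractf sum_distrib_left mult.left_commute)
  then show ?thesis using assms by (simp add: sum_mult_ev)
qed

subsection \<open>Quadratic forms of positive semidefinite matrices\<close>

definition quad_form :: "nat \<Rightarrow> (nat \<Rightarrow> nat \<Rightarrow> real) \<Rightarrow> (nat \<Rightarrow> real) \<Rightarrow> real" where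
  "quad_form n Z x = (\<Sum>i=1..n. \<Sum>j=1..n. x i * Z i j * x j)"

lemma psd_quad_form_nonneg: "psd n Z \<Longrightarrow> quad_form n Z x \<ge> 0"
  unfolding psd_def quad_form_def by blast

lemma quad_form_add_ev:
  assumes sym: "symmetric_mat n Z" and k: "k \<in> {1..n}"
  shows "quad_form n Z (\<lambda>i. x i + t * ev k i)
    = quad_form n Z x + 2 * t * (\<Sum>j=1..n. Z k j * x j) + t^2 * Z k k"
proof -
  have expand: "(x i + t * ev k i) * Z i j * (x j + t * ev k j) =
     x i * Z i j * x j + t * (ev k i * (Z i j * x j)) + t * (ev k j * (x i * Z i j))
       + t^2 * (ev k i * (ev k j * Z i j))" for i j
    by (simp add: algebra_simps power2_eq_square)
  have row: "(\<Sum>i=1..n. ev k i * (\<Sum>j=1..n. Z i j * x j)) = (\<Sum>j=1..n. Z k j * x j)"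
    using k by (simp add: sum_ev_mult)
  have col: "(\<Sum>i=1..n. \<Sum>j=1..n. ev k j * (x i * Z i j)) = (\<Sum>j=1..n. Z k j * x j)"
  proof -
    have "(\<Sum>i=1..n. \<Sum>j=1..n. ev k j * (x i * Z i j)) = (\<Sum>i=1..n. x i * Z i k)"
      using k by (simp add: sum_ev_mult)
    also have "\<dots> = (\<Sum>i=1..n. Z k i * x i)"
      using sym k unfolding symmetric_mat_def by (intro sum.cong) (auto simp: mult.commute)
    finally show ?thesis .
  qed
  have diag: "(\<Sum>i=1..n. ev k i * (\<Sum>j=1..n. ev k j * Z i j)) = Z k k"
    using k by (simp add: sum_ev_mult)
  show ?thesis
    unfolding quad_form_def expand sum.distrib sum_distrib_left[symmetric] row col diag
    by simp
qed

lemma nonneg_quadratic_linear_coeff_zero: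
  fixes b c :: real
  assumes "c \<ge> 0" and "\<And>t. 2 * t * b + t^2 * c \<ge> 0"
  shows "b = 0"
proof (rule ccontr)
  assume "b \<noteq> 0"
  define t where "t = - b / (c + 1)"
  have "2 * t * b + t^2 * c = b^2 * (- c - 2) / (c + 1)^2"
    using assms(1) unfolding t_def by (simp add: field_simps power2_eq_square add_nonneg_eq_0_iff)
  also have "\<dots> < 0" using \<open>b \<noteq> 0\<close> assms(1)
    by (intro divide_neg_pos mult_pos_neg) auto
  finally show False using assms(2)[of t] by simp
qed

lemma psd_quad_form_zero_imp_mult_zero:
  assumes "psd n Z" "quad_form n Z x = 0" "k \<in> {1..n}"
  shows "(\<Sum>j=1..n. Z k j * x j) = 0"
proof (rule nonneg_quadratic_linear_coeff_zero)
  have sym: "symmetric_mat n Z" using assms(1) unfolding psd_def by blast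
  have "quad_form n Z (\<lambda>i. 0 + 1 * ev k i) = Z k k"
    using quad_form_add_ev[OF sym assms(3), of "\<lambda>_. 0" 1] by (simp add: quad_form_def)
  then show "Z k k \<ge> 0" using psd_quad_form_nonneg[OF assms(1)] by metis
  fix t
  have "quad_form n Z (\<lambda>i. x i + t * ev k i) \<ge> 0" by (rule psd_quad_form_nonneg[OF assms(1)])
  then show "2 * t * (\<Sum>j=1..n. Z k j * x j) + t^2 * Z k k \<ge> 0"
    using quad_form_add_ev[OF sym assms(3), of x t] assms(2) by simp
qed

lemma quad_form_ev_diff_ev_diff:
  assumes sym: "symmetric_mat n Z" and "p \<in> {1..n}" "q \<in> {1..n}" "m \<in> {1..n}"
  shows "quad_form n Z (\<lambda>k. ev p k - ev q k - t * ev m k) =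
     Z p p + Z q q - 2 * Z p q - 2 * t * (Z p m - Z q m) + t^2 * Z m m"
proof -
  have "quad_form n Z (\<lambda>k. ev p k - ev q k - t * ev m k) =
     (\<Sum>i=1..n. (ev p i - ev q i - t * ev m i) * (Z i p - Z i q - t * Z i m))"
    unfolding quad_form_def
    using assms by (simp add: sum_distrib_left[symmetric] mult.assoc sum_mult_ev_diff_ev_diff)
  also have "\<dots> = (Z p p - Z p q - t * Z p m) - (Z q p - Z q q - t * Z q m)
      - t * (Z m p - Z m q - t * Z m m)"
    using assms sum_mult_ev_diff_ev_diff[of "{1..n}" p q m "\<lambda>i. Z i p - Z i q - t * Z i m" t]
    by (simp add: mult.commute)
  also have "\<dots> = Z p p + Z q q - 2 * Z p q - 2 * t * (Z p m - Z q m) + t^2 * Z m m"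
    using sym assms unfolding symmetric_mat_def by (simp add: algebra_simps power2_eq_square)
  finally show ?thesis .
qed

lemma quad_form_gram:
  fixes a :: "nat \<Rightarrow> real" and b :: "nat \<Rightarrow> nat \<Rightarrow> real"
  shows "(\<Sum>k\<in>A. \<Sum>l\<in>A. x k * (c * (a k * a l + (\<Sum>i\<in>I. b i k * b i l))) * x l)
    = c * ((\<Sum>k\<in>A. x k * a k)^2 + (\<Sum>i\<in>I. (\<Sum>k\<in>A. x k * b i k)^2))"
proof -
  have expand: "x k * (c * (a k * a l + (\<Sum>i\<in>I. b i k * b i l))) * x l
     = c * ((x k * a k) * (x l * a l)) + c * (\<Sum>i\<in>I. (x k * b i k) * (x l * b i l))" for k l
    by (simp add: algebra_simps sum_distrib_left sum_distrib_right)
  have "(\<Sum>k\<in>A. \<Sum>l\<in>A. \<Sum>i\<in>I. (x k * b i k) * (x l * b i l))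
      = (\<Sum>k\<in>A. \<Sum>i\<in>I. \<Sum>l\<in>A. (x k * b i k) * (x l * b i l))"
    by (rule sum.cong[OF refl], rule sum.swap)
  also have "\<dots> = (\<Sum>i\<in>I. \<Sum>k\<in>A. \<Sum>l\<in>A. (x k * b i k) * (x l * b i l))"
    by (rule sum.swap)
  also have "\<dots> = (\<Sum>i\<in>I. (\<Sum>k\<in>A. x k * b i k)^2)"
    by (simp only: power2_eq_square sum_product)
  finally have b_part: "(\<Sum>k\<in>A. \<Sum>l\<in>A. \<Sum>i\<in>I. (x k * b i k) * (x l * b i l))
      = (\<Sum>i\<in>I. (\<Sum>k\<in>A. x k * b i k)^2)" .
  have a_part: "(\<Sum>k\<in>A. \<Sum>l\<in>A. (x k * a k) * (x l * a l)) = (\<Sum>k\<in>A. x k * a k)^2"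
    by (simp only: power2_eq_square sum_product)
  have "(\<Sum>k\<in>A. \<Sum>l\<in>A. x k * (c * (a k * a l + (\<Sum>i\<in>I. b i k * b i l))) * x l)
    = c * (\<Sum>k\<in>A. \<Sum>l\<in>A. (x k * a k) * (x l * a l))
      + c * (\<Sum>k\<in>A. \<Sum>l\<in>A. \<Sum>i\<in>I. (x k * b i k) * (x l * b i l))"
    by (simp only: expand sum.distrib sum_distrib_left)
  then show ?thesis unfolding a_part b_part by (simp add: distrib_left)
qed

subsection \<open>The data \<open>B\<close>, \<open>E\<close>, \<open>F\<close>, \<open>J\<close>, \<open>g\<^sub>1\<close>\<close>

definition Brow :: "nat \<Rightarrow> nat \<Rightarrow> real" where
  "Brow i c = (if i = 1 then ev 1 c else - ev (i - 1) c + ev i c)"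

lemma Bmat_odd: "i \<ge> 1 \<Longrightarrow> Bmat s (2 * i - 1) c = Brow i c"
  unfolding Bmat_def Brow_def Let_def by (cases i) auto

lemma Bmat_even: "Bmat s (2 * i) c = Brow i c"
  unfolding Bmat_def Brow_def Let_def by simp

lemma sum_mult_Brow:
  assumes "c \<ge> 1"
  shows "(\<Sum>i=1..n. W i * Brow i c) = (if c \<le> n then W c else 0) - (if c + 1 \<le> n then W (c+1) else 0)"
  using assms by (induction n) (auto simp: Brow_def ev_def le_Suc_eq)

lemma sum_mult_Emat:
  assumes "c \<ge> 1"
  shows "(\<Sum>l=1..3 * s + 1. h l * Emat s c l) =
    - dvec s c * h 1 + (if c \<le> s then h (s + 2 * c) + h (s + 2 * c + 1) else 0)
      - (if c + 1 \<le> s then h (s + 2 * (c+1)) + h (s + 2 * (c+1) + 1) else 0)"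
proof -
  have "(\<Sum>l=1..3 * s + 1. h l * Emat s c l) = (\<Sum>l=1..(s+1) + 2 * s. h l * Emat s c l)"
    by (simp add: algebra_simps)
  also have "\<dots> = (\<Sum>l=1..s+1. h l * Emat s c l) + (\<Sum>r=1..2 * s. h (s + 1 + r) * Emat s c (s + 1 + r))"
    by (rule sum_cl_ivl_add_split)
  also have "(\<Sum>l=1..s+1. h l * Emat s c l) = (\<Sum>l=1..s+1. (- dvec s c * h l) * ev 1 l)"
    by (intro sum.cong) (auto simp: Emat_def)
  also have "\<dots> = - dvec s c * h 1" by (rule sum_mult_ev) auto
  also have "(\<Sum>r=1..2 * s. h (s + 1 + r) * Emat s c (s + 1 + r))
      = (\<Sum>r=1..2 * s. h (s + 1 + r) * Bmat s r c)"
    by (intro sum.cong) (auto simp: Emat_def)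
  also have "\<dots> = (\<Sum>i=1..s. (h (s + 2 * i) + h (s + 2 * i + 1)) * Brow i c)"
    unfolding sum_cl_ivl_pairs
  proof (intro sum.cong refl)
    fix i assume i: "i \<in> {1..s}"
    then have "s + 1 + (2 * i - 1) = s + 2 * i" by auto
    then show "h (s + 1 + (2 * i - 1)) * Bmat s (2 * i - 1) c + h (s + 1 + 2 * i) * Bmat s (2 * i) c
       = (h (s + 2 * i) + h (s + 2 * i + 1)) * Brow i c"
      using Bmat_odd[of i s c] i by (simp add: Bmat_even distrib_right)
  qed
  finally show ?thesis using sum_mult_Brow[OF assms, of "\<lambda>i. h (s + 2 * i) + h (s + 2 * i + 1)" s]
    by simp
qed

lemma Fmat_odd: "i \<ge> 1 \<Longrightarrow> Fmat s (2 * i - 1) c = (ev 1 c + ev (i+1) c) / 2"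
  unfolding Fmat_def Let_def by (cases i) auto

lemma Fmat_even: "Fmat s (2 * i) c = (ev 1 c - ev (i+1) c) / 2"
  unfolding Fmat_def Let_def by simp

lemma objective_eq_sum_pairs:
  "objective s Z = (\<Sum>i=1..s. (Z (s + 2 * i) 1 + Z (s + 2 * i) (i+1)) / 2
      + (Z (s + 2 * i + 1) 1 - Z (s + 2 * i + 1) (i+1)) / 2)"
  unfolding objective_def frob_def Z21_def sum_cl_ivl_pairs
proof (intro sum.cong refl)
  fix i assume i: "i \<in> {1..s}"
  have shift: "s + 1 + (2 * i - 1) = s + 2 * i" "s + 1 + 2 * i = s + 2 * i + 1" and "1 \<le> i"
    using i by auto
  have odd_row: "(\<Sum>c=1..s+1. Fmat s (2 * i - 1) c * Z (s + 2 * i) c)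
      = (Z (s + 2 * i) 1 + Z (s + 2 * i) (i+1)) / 2"
    using i unfolding Fmat_odd[OF \<open>1 \<le> i\<close>] by (simp add: add_divide_distrib distrib_right sum.distrib
        sum_divide_distrib[symmetric] sum_ev_mult del: sum.cl_ivl_Suc)
  have even_row: "(\<Sum>c=1..s+1. Fmat s (2 * i) c * Z (s + 2 * i + 1) c)
      = (Z (s + 2 * i + 1) 1 - Z (s + 2 * i + 1) (i+1)) / 2"
    using i unfolding Fmat_even by (simp add: diff_divide_distrib left_diff_distrib sum_subtractf
        sum_divide_distrib[symmetric] sum_ev_mult del: sum.cl_ivl_Suc)
  show "(\<Sum>c=1..s+1. Fmat s (2 * i - 1) c * Z (s + 1 + (2 * i - 1)) c)
      + (\<Sum>c=1..s+1. Fmat s (2 * i) c * Z (s + 1 + 2 * i) c)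
    = (Z (s + 2 * i) 1 + Z (s + 2 * i) (i+1)) / 2 + (Z (s + 2 * i + 1) 1 - Z (s + 2 * i + 1) (i+1)) / 2"
    unfolding shift odd_row even_row ..
qed

lemma frob_outer_g1: "n \<ge> 1 \<Longrightarrow> frob n n (outer (g1 s)) Z = Z 1 1"
proof -
  assume "n \<ge> 1"
  have "g1 s = ev 1"
    by (rule ext) (auto simp: g1_def vstack_def ev_def)
  then have "frob n n (outer (g1 s)) Z = (\<Sum>i=1..n. ev 1 i * (\<Sum>j=1..n. ev 1 j * Z i j))"
    unfolding frob_def outer_def by (simp add: mult.assoc sum_distrib_left)
  also have "\<dots> = Z 1 1" using \<open>n \<ge> 1\<close> by (simp add: sum_ev_mult)
  finally show ?thesis .
qed

lemma frob_Jmat_Z11: "frob (s+1) (s+1) Jmat (Z11 s Z) = Z 1 1 - (\<Sum>m=1..s. Z (m+1) (m+1))"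
proof -
  have "frob (s+1) (s+1) Jmat (Z11 s Z) = (\<Sum>i=1..s+1. (if i = 1 then 1 else -1) * Z i i)"
    unfolding frob_def Z11_def
  proof (intro sum.cong refl)
    fix i assume "i \<in> {1..s+1}"
    have "(\<Sum>j=1..s+1. Jmat i j * Z i j) = (\<Sum>j=1..s+1. ((if i = 1 then 1 else -1) * Z i j) * ev i j)"
      by (intro sum.cong) (auto simp: Jmat_def ev_def)
    also have "\<dots> = (if i = 1 then 1 else -1) * Z i i"
      using \<open>i \<in> {1..s+1}\<close> by (intro sum_mult_ev) auto
    finally show "(\<Sum>j=1..s+1. Jmat i j * Z i j) = (if i = 1 then 1 else -1) * Z i i" .
  qed
  also have "\<dots> = (\<Sum>i=1..1+s. (if i = 1 then 1 else -1) * Z i i)" by (simp add: add.commute)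
  also have "\<dots> = Z 1 1 - (\<Sum>m=1..s. Z (m+1) (m+1))"
    unfolding sum_cl_ivl_add_split by (simp add: sum_negf)
  finally show ?thesis .
qed

lemma frob_Imat: "frob n n Imat Z = (\<Sum>i=1..n. Z i i)"
proof -
  have "frob n n Imat Z = (\<Sum>i=1..n. \<Sum>j=1..n. Z i j * ev i j)"
    unfolding frob_def by (intro sum.cong refl) (auto simp: Imat_def ev_def)
  also have "\<dots> = (\<Sum>i=1..n. Z i i)"
    by (intro sum.cong refl sum_mult_ev) auto
  finally show ?thesis .
qed

subsection \<open>An upper bound on the objective\<close>

lemma feasible_Emat_kernel:
  assumes feas: "feasible s r Z" and c: "c \<in> {1..s}" and k: "k \<in> {1..3 * s + 1}"
  shows "- dvec s c * Z k 1 + (Z k (s + 2 * c) + Z k (s + 2 * c + 1))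
    - (if c + 1 \<le> s then Z k (s + 2 * (c+1)) + Z k (s + 2 * (c+1) + 1) else 0) = 0"
proof -
  have "psd (3 * s + 1) Z" and "quad_form (3 * s + 1) Z (Emat s c) = 0"
    using feas c unfolding feasible_def EZEt_diag_def quad_form_def by auto
  from psd_quad_form_zero_imp_mult_zero[OF this k]
  have "(\<Sum>l=1..3 * s + 1. Z k l * Emat s c l) = 0" .
  then show ?thesis using sum_mult_Emat[of c "Z k" s] c by auto
qed

lemma feasible_column_pair_sum:
  assumes feas: "feasible s r Z" and k: "k \<in> {1..3 * s + 1}" and i: "i \<in> {1..s}"
  shows "Z k (s + 2 * i) + Z k (s + 2 * i + 1) = Z k 1"
proof -
  have "i \<le> s" using i by simp
  then show ?thesis
  proof (induction i rule: inc_induct)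
    case base
    show ?case using feasible_Emat_kernel[OF feas _ k, of s] i by (simp add: dvec_def ev_def)
  next
    case (step c)
    then show ?case using feasible_Emat_kernel[OF feas _ k, of c] i by (simp add: dvec_def ev_def)
  qed
qed

lemma feasible_Z_1_1: "feasible s r Z \<Longrightarrow> Z 1 1 = 1"
  unfolding feasible_def using frob_outer_g1[of "3 * s + 1" s Z] by simp

lemma feasible_pair_bound:
  assumes feas: "feasible s r Z" and i: "i \<in> {1..s}"
  shows "2 * t * (Z (s + 2 * i) (i + 1) - Z (s + 2 * i + 1) (i + 1)) \<le> 1 + t^2 * Z (i + 1) (i + 1)"
proof -
  define n where "n = 3 * s + 1"
  define p where "p = s + 2 * i"
  define q where "q = s + 2 * i + 1"
  define m where "m = i + 1"
  have psdZ: "psd n Z" using feas unfolding feasible_def n_def by blast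
  then have sym: "symmetric_mat n Z" unfolding psd_def by blast
  have pqm: "p \<in> {1..n}" "q \<in> {1..n}" "m \<in> {1..n}" "1 \<in> {1..n}"
    using i unfolding p_def q_def m_def n_def by auto
  have symZ: "Z q p = Z p q" "Z p 1 = Z 1 p" "Z q 1 = Z 1 q"
    using sym pqm unfolding symmetric_mat_def by auto
  have "Z p p + Z p q = Z p 1" "Z q p + Z q q = Z q 1" "Z 1 p + Z 1 q = Z 1 1"
    using feasible_column_pair_sum[OF feas _ i] pqm unfolding p_def q_def n_def by auto
  moreover have "Z p q \<ge> 0"
  proof -
    have "2 * i - 1 \<in> {1..2 * s}" "2 * i \<in> {1..2 * s}" using i by auto
    then have "Z22 s Z (2 * i - 1) (2 * i) \<ge> 0" using feas unfolding feasible_def by blast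
    moreover have "s + 1 + (2 * i - 1) = p" "s + 1 + 2 * i = q" using i unfolding p_def q_def by auto
    ultimately show ?thesis unfolding Z22_def by simp
  qed
  ultimately have "Z p p + Z q q - 2 * Z p q \<le> 1"
    using symZ feasible_Z_1_1[OF feas] by linarith
  moreover have "quad_form n Z (\<lambda>k. ev p k - ev q k - t * ev m k) \<ge> 0"
    by (rule psd_quad_form_nonneg[OF psdZ])
  ultimately show ?thesis
    using quad_form_ev_diff_ev_diff[OF sym pqm(1-3), of t] unfolding p_def q_def m_def by linarith
qed

lemma feasible_objective_eq:
  assumes feas: "feasible s r Z"
  shows "objective s Z
    = real s / 2 + (\<Sum>i=1..s. Z (s + 2 * i) (i + 1) - Z (s + 2 * i + 1) (i + 1)) / 2"
proof -
  have "objective s Z = (\<Sum>i=1..s. 1/2 + (Z (s + 2 * i) (i + 1) - Z (s + 2 * i + 1) (i + 1)) / 2)"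
    unfolding objective_eq_sum_pairs
  proof (intro sum.cong refl)
    fix i assume i: "i \<in> {1..s}"
    then have "Z 1 (s + 2 * i) + Z 1 (s + 2 * i + 1) = 1"
      using feasible_column_pair_sum[OF feas, of 1 i] feasible_Z_1_1[OF feas] by simp
    moreover have "Z (s + 2 * i) 1 = Z 1 (s + 2 * i)" "Z (s + 2 * i + 1) 1 = Z 1 (s + 2 * i + 1)"
      using feas i unfolding feasible_def symmetric_mat_def by auto
    ultimately show "(Z (s + 2 * i) 1 + Z (s + 2 * i) (i+1)) / 2
        + (Z (s + 2 * i + 1) 1 - Z (s + 2 * i + 1) (i+1)) / 2
      = 1/2 + (Z (s + 2 * i) (i + 1) - Z (s + 2 * i + 1) (i + 1)) / 2"
      by (simp add: field_simps)
  qed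
  then show ?thesis by (simp add: sum.distrib sum_divide_distrib)
qed

lemma objective_le_of_feasible:
  assumes "s \<ge> 1" and feas: "feasible s r Z"
  shows "objective s Z \<le> (sqrt (real s) + real s) / 2"
proof -
  define t where "t = sqrt (real s)"
  have t: "t^2 = real s" "t > 0" using assms(1) unfolding t_def by auto
  define D where "D i = Z (s + 2 * i) (i + 1) - Z (s + 2 * i + 1) (i + 1)" for i
  have diag_le: "(\<Sum>m=1..s. Z (m+1) (m+1)) \<le> 1"
    using feas feasible_Z_1_1[OF feas] unfolding feasible_def frob_Jmat_Z11 by simp
  have "2 * t * (\<Sum>i=1..s. D i) = (\<Sum>i=1..s. 2 * t * D i)" by (simp add: sum_distrib_left)
  also have "\<dots> \<le> (\<Sum>i=1..s. 1 + t^2 * Z (i+1) (i+1))"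
    unfolding D_def by (intro sum_mono feasible_pair_bound[OF feas])
  also have "\<dots> = real s + t^2 * (\<Sum>i=1..s. Z (i+1) (i+1))"
    by (simp add: sum.distrib sum_distrib_left)
  also have "\<dots> \<le> real s + t^2 * 1"
    using diag_le by (intro add_left_mono mult_left_mono) auto
  also have "\<dots> = 2 * t * t" using t by (simp add: power2_eq_square)
  finally have "(\<Sum>i=1..s. D i) \<le> t" using t(2) by simp
  then show ?thesis using feasible_objective_eq[OF feas] unfolding D_def t_def by simp
qed

subsection \<open>The Gram matrix \<open>Zopt\<close>\<close>

definition alt_sign :: "nat \<Rightarrow> real" where "alt_sign r = (if odd r then 1 else -1)"

lemma alt_sign_mult_self: "alt_sign r * alt_sign r = 1"
  by (simp add: alt_sign_def)

lemma ev_pair_diff: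
  "r \<ge> 1 \<Longrightarrow> ev (2 * m - 1) r - ev (2 * m) r = (if m = (r + 1) div 2 then alt_sign r else 0)"
  unfolding ev_def alt_sign_def by (auto; presburger)

lemma avec_upper: "k \<le> s + 1 \<Longrightarrow> avec s k = 2 * ev 1 k"
  by (simp add: avec_def vstack_def)

lemma avec_lower: "s + 1 < k \<Longrightarrow> avec s k = 1"
  by (simp add: avec_def vstack_def ones_def)

lemma bvec_upper: "k \<le> s + 1 \<Longrightarrow> bvec s i k = 2 / sqrt (real s) * ev (i + 1) k"
  by (simp add: bvec_def vstack_def)

lemma bvec_lower:
  "r \<ge> 1 \<Longrightarrow> bvec s i (s + 1 + r) = (if i = (r + 1) div 2 then alt_sign r else 0)"
  unfolding ev_pair_diff[symmetric] by (simp add: bvec_def vstack_def)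

lemma Zopt_gram:
  "Zopt s k l = (1/4) * (avec s k * avec s l + (\<Sum>i\<in>{1..s}. bvec s i k * bvec s i l))"
  by (simp add: Zopt_def outer_def)

lemma symmetric_Zopt: "symmetric_mat n (Zopt s)"
  unfolding symmetric_mat_def Zopt_gram by (simp add: mult.commute)

lemma quad_form_Zopt:
  "quad_form n (Zopt s) x =
    (1/4) * ((\<Sum>k=1..n. x k * avec s k)^2 + (\<Sum>i=1..s. (\<Sum>k=1..n. x k * bvec s i k)^2))"
  unfolding quad_form_def Zopt_gram by (rule quad_form_gram)

lemma psd_Zopt: "psd n (Zopt s)"
  unfolding psd_def quad_form_def[symmetric] quad_form_Zopt
  by (auto intro!: symmetric_Zopt add_nonneg_nonneg sum_nonneg)

lemma Zopt_upper:
  assumes "s \<ge> 1" "k \<le> s + 1" "l \<le> s + 1"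
  shows "Zopt s k l = ev 1 k * ev 1 l + (1 / real s) * (\<Sum>i=1..s. ev (i+1) k * ev (i+1) l)"
proof -
  have "bvec s i k * bvec s i l = (4 / real s) * (ev (i+1) k * ev (i+1) l)" for i
  proof -
    have "bvec s i k * bvec s i l = (4 / (sqrt (real s) * sqrt (real s))) * (ev (i+1) k * ev (i+1) l)"
      using assms by (simp add: bvec_upper field_simps)
    then show ?thesis using assms by simp
  qed
  then have "(\<Sum>i=1..s. bvec s i k * bvec s i l) = (4 / real s) * (\<Sum>i=1..s. ev (i+1) k * ev (i+1) l)"
    by (simp add: sum_distrib_left)
  then show ?thesis unfolding Zopt_gram using assms by (simp add: avec_upper field_simps)
qed

lemma Zopt_first_column: "s \<ge> 1 \<Longrightarrow> k \<le> s + 1 \<Longrightarrow> Zopt s k 1 = ev 1 k"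
  by (simp add: Zopt_upper ev_def)

lemma Zopt_upper_diag: assumes "s \<ge> 1" "m \<in> {1..s}" shows "Zopt s (m+1) (m+1) = 1 / real s"
proof -
  have "(\<Sum>i=1..s. ev (i+1) (m+1) * ev (i+1) (m+1)) = (\<Sum>i=1..s. ev m i * 1)"
    by (intro sum.cong) (auto simp: ev_def)
  also have "\<dots> = 1" using assms by (intro sum_ev_mult) auto
  finally show ?thesis using assms by (simp add: Zopt_upper ev_def)
qed

lemma Zopt_lower_left:
  assumes "s \<ge> 1" "r \<in> {1..2 * s}" "j \<le> s + 1"
  shows "Zopt s (s + 1 + r) j = ev 1 j / 2 + alt_sign r / (2 * sqrt (real s)) * ev ((r + 1) div 2 + 1) j"
proof -
  have "(r + 1) div 2 \<in> {1..s}" using assms by auto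
  have "(\<Sum>i=1..s. bvec s i (s + 1 + r) * bvec s i j)
      = (\<Sum>i=1..s. if i = (r + 1) div 2 then alt_sign r * (2 / sqrt (real s) * ev (i + 1) j) else 0)"
    using assms bvec_lower[of r s] bvec_upper[of j s] by (intro sum.cong) simp_all
  also have "\<dots> = alt_sign r * (2 / sqrt (real s) * ev ((r + 1) div 2 + 1) j)"
    using \<open>(r + 1) div 2 \<in> {1..s}\<close> by simp
  finally have "(\<Sum>i=1..s. bvec s i (s + 1 + r) * bvec s i j)
      = alt_sign r * (2 / sqrt (real s) * ev ((r + 1) div 2 + 1) j)" .
  then show ?thesis unfolding Zopt_gram using assms by (simp add: avec_lower avec_upper field_simps)
qed

lemma Zopt_lower_right:
  assumes "s \<ge> 1" "r \<in> {1..2 * s}" "r' \<in> {1..2 * s}"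
  shows "Zopt s (s + 1 + r) (s + 1 + r')
    = (1/4) * (1 + (if (r + 1) div 2 = (r' + 1) div 2 then alt_sign r * alt_sign r' else 0))"
proof -
  have "(r + 1) div 2 \<in> {1..s}" using assms by auto
  have "(\<Sum>i=1..s. bvec s i (s + 1 + r) * bvec s i (s + 1 + r'))
      = (\<Sum>i=1..s. if i = (r + 1) div 2
          then alt_sign r * (if i = (r' + 1) div 2 then alt_sign r' else 0) else 0)"
    using assms bvec_lower[of r s] bvec_lower[of r' s] by (intro sum.cong) simp_all
  also have "\<dots> = (if (r + 1) div 2 = (r' + 1) div 2 then alt_sign r * alt_sign r' else 0)"
    using \<open>(r + 1) div 2 \<in> {1..s}\<close> by simp
  finally have "(\<Sum>i=1..s. bvec s i (s + 1 + r) * bvec s i (s + 1 + r'))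
      = (if (r + 1) div 2 = (r' + 1) div 2 then alt_sign r * alt_sign r' else 0)" .
  then show ?thesis unfolding Zopt_gram using assms by (simp add: avec_lower)
qed

lemma sum_Emat_mult_avec:
  assumes "c \<in> {1..s}"
  shows "(\<Sum>k=1..3 * s + 1. Emat s c k * avec s k) = 0"
proof -
  have pair: "avec s (s + 2 * d) + avec s (s + 2 * d + 1) = 2" if "d \<ge> 1" for d
    using that by (simp add: avec_lower)
  have "(\<Sum>k=1..3 * s + 1. Emat s c k * avec s k) = (\<Sum>k=1..3 * s + 1. avec s k * Emat s c k)"
    by (simp add: mult.commute)
  also have "\<dots> = - dvec s c * avec s 1 + (if c \<le> s then avec s (s + 2 * c) + avec s (s + 2 * c + 1) else 0)
      - (if c + 1 \<le> s then avec s (s + 2 * (c+1)) + avec s (s + 2 * (c+1) + 1) else 0)"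
    using assms by (intro sum_mult_Emat) auto
  also have "\<dots> = 0"
    using assms pair[of c] pair[of "c + 1"]
    by (cases "c = s") (auto simp: avec_upper dvec_def ev_def)
  finally show ?thesis .
qed

lemma sum_Emat_mult_bvec:
  assumes "c \<in> {1..s}" "m \<in> {1..s}"
  shows "(\<Sum>k=1..3 * s + 1. Emat s c k * bvec s m k) = 0"
proof -
  have pair: "bvec s m (s + 2 * d) + bvec s m (s + 2 * d + 1) = 0" if "d \<ge> 1" for d
  proof -
    have idx: "s + 1 + (2 * d - 1) = s + 2 * d" "s + 1 + 2 * d = s + 2 * d + 1"
      "(2 * d - 1 + 1) div 2 = d" "(2 * d + 1) div 2 = d" and "odd (2 * d - 1)"
      using that by auto
    have "bvec s m (s + 2 * d) = (if m = d then alt_sign (2 * d - 1) else 0)"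
      using bvec_lower[of "2 * d - 1" s m] that unfolding idx by simp
    moreover have "bvec s m (s + 2 * d + 1) = (if m = d then alt_sign (2 * d) else 0)"
      using bvec_lower[of "2 * d" s m] that unfolding idx by simp
    ultimately show ?thesis using \<open>odd (2 * d - 1)\<close> by (simp add: alt_sign_def)
  qed
  have "(\<Sum>k=1..3 * s + 1. Emat s c k * bvec s m k) = (\<Sum>k=1..3 * s + 1. bvec s m k * Emat s c k)"
    by (simp add: mult.commute)
  also have "\<dots> = - dvec s c * bvec s m 1 + (if c \<le> s then bvec s m (s + 2 * c) + bvec s m (s + 2 * c + 1) else 0)
      - (if c + 1 \<le> s then bvec s m (s + 2 * (c+1)) + bvec s m (s + 2 * (c+1) + 1) else 0)"
    using assms by (intro sum_mult_Emat) auto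
  also have "\<dots> = 0"
    using assms pair[of c] pair[of "c + 1"] by (simp add: bvec_upper ev_def)
  finally show ?thesis .
qed

lemma EZEt_diag_Zopt:
  assumes "c \<in> {1..s}"
  shows "EZEt_diag s (Zopt s) c = 0"
proof -
  have "EZEt_diag s (Zopt s) c = quad_form (3 * s + 1) (Zopt s) (Emat s c)"
    by (simp only: EZEt_diag_def quad_form_def)
  also have "\<dots> = 0"
    unfolding quad_form_Zopt sum_Emat_mult_avec[OF assms] using sum_Emat_mult_bvec[OF assms] by simp
  finally show ?thesis .
qed

lemma Zopt_1_1: "s \<ge> 1 \<Longrightarrow> Zopt s 1 1 = 1"
  using Zopt_first_column[of s 1] by (simp add: ev_def)

lemma sum_Zopt_upper_diag:
  assumes "s \<ge> 1"
  shows "(\<Sum>m=1..s. Zopt s (m+1) (m+1)) = 1"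
proof -
  have "(\<Sum>m=1..s. Zopt s (m+1) (m+1)) = (\<Sum>m=1..s. 1 / real s)"
    by (intro sum.cong refl) (rule Zopt_upper_diag[OF assms])
  then show ?thesis using assms by simp
qed

lemma frob_Imat_Zopt:
  assumes s: "s \<ge> 1"
  shows "frob (3 * s + 1) (3 * s + 1) Imat (Zopt s) = real s + 2"
proof -
  have "frob (3 * s + 1) (3 * s + 1) Imat (Zopt s) = (\<Sum>i=1..(1 + s) + 2 * s. Zopt s i i)"
    unfolding frob_Imat by (simp add: algebra_simps)
  also have "\<dots> = Zopt s 1 1 + (\<Sum>m=1..s. Zopt s (1 + m) (1 + m))
      + (\<Sum>r=1..2 * s. Zopt s (1 + s + r) (1 + s + r))"
    unfolding sum_cl_ivl_add_split by simp
  also have "(\<Sum>r=1..2 * s. Zopt s (1 + s + r) (1 + s + r)) = (\<Sum>r=1..2 * s. 1/2)"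
  proof (intro sum.cong refl)
    fix r assume "r \<in> {1..2 * s}"
    from Zopt_lower_right[OF s this this]
    show "Zopt s (1 + s + r) (1 + s + r) = 1/2" by (simp add: add.commute alt_sign_mult_self)
  qed
  finally show ?thesis using Zopt_1_1[OF s] sum_Zopt_upper_diag[OF s] by (simp add: add.commute)
qed

lemma Zopt_lower_row_in_Uhat2:
  assumes s: "s \<ge> 1" and i: "i \<in> {1..2 * s}"
  shows "(\<lambda>j. Z21 s (Zopt s) i j) \<in> Uhat2 s"
proof -
  define p where "p = (i + 1) div 2 + 1"
  have p: "p \<in> {2..s+1}" using i unfolding p_def by auto
  have "(\<Sum>j\<in>{2..s+1}. (Zopt s (s + 1 + i) j)\<^sup>2) = (\<Sum>j\<in>{2..s+1}. 1 / (4 * real s) * ev p j)"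
  proof (intro sum.cong refl)
    fix j assume "j \<in> {2..s+1}"
    then have "Zopt s (s + 1 + i) j = alt_sign i / (2 * sqrt (real s)) * ev p j"
      using Zopt_lower_left[OF s i, of j] unfolding p_def by (simp add: ev_def)
    then show "(Zopt s (s + 1 + i) j)\<^sup>2 = 1 / (4 * real s) * ev p j"
      using s by (simp add: power2_eq_square alt_sign_def ev_def)
  qed
  also have "\<dots> = 1 / (4 * real s)" using p by (intro sum_mult_ev) auto
  finally have "sqrt (\<Sum>j\<in>{2..s+1}. (Zopt s (s + 1 + i) j)\<^sup>2) = sqrt (1 / (4 * real s))"
    by simp
  also have "\<dots> \<le> sqrt (1/4)"
    using s by (intro real_sqrt_le_mono) (simp add: field_simps)
  finally have "sqrt (\<Sum>j\<in>{2..s+1}. (Zopt s (s + 1 + i) j)\<^sup>2) \<le> sqrt (1/4)" .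
  moreover have "Zopt s (s + 1 + i) 1 = 1/2"
    using Zopt_lower_left[OF s i, of 1] p unfolding p_def by (simp add: ev_def)
  ultimately show ?thesis unfolding Uhat2_def Z21_def by (simp add: real_sqrt_divide)
qed

lemma Zopt_feasible:
  assumes s: "s \<ge> 1" and r: "r \<ge> real s + 2"
  shows "feasible s r (Zopt s)"
proof -
  have "frob (s+1) (s+1) Jmat (Z11 s (Zopt s)) = 0"
    unfolding frob_Jmat_Z11 Zopt_1_1[OF s] sum_Zopt_upper_diag[OF s] by simp
  moreover have "(\<lambda>i. Z11 s (Zopt s) i 1) \<in> Uhat2 s"
  proof -
    have "(\<Sum>i\<in>{2..s+1}. (Z11 s (Zopt s) i 1)\<^sup>2) = 0"
      unfolding Z11_def using Zopt_first_column[OF s] by (intro sum.neutral) (auto simp: ev_def)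
    then show ?thesis unfolding Uhat2_def Z11_def using Zopt_1_1[OF s] by simp
  qed
  moreover have "Z22 s (Zopt s) i j \<ge> 0" if "i \<in> {1..2 * s}" "j \<in> {1..2 * s}" for i j
    unfolding Z22_def using Zopt_lower_right[OF s that]
    by (auto simp: alt_sign_def split: if_split_asm)
  moreover have "frob (3 * s + 1) (3 * s + 1) (outer (g1 s)) (Zopt s) = 1"
    using frob_outer_g1[of "3 * s + 1" s "Zopt s"] Zopt_1_1[OF s] by simp
  ultimately show ?thesis
    using r frob_Imat_Zopt[OF s] symmetric_Zopt psd_Zopt EZEt_diag_Zopt Zopt_lower_row_in_Uhat2[OF s]
    unfolding feasible_def by auto
qed

lemma objective_Zopt:
  assumes "s \<ge> 1"
  shows "objective s (Zopt s) = (sqrt (real s) + real s) / 2"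
proof -
  have "objective s (Zopt s) = (\<Sum>i=1..s. 1/2 + 1 / (2 * sqrt (real s)))"
    unfolding objective_eq_sum_pairs
  proof (intro sum.cong refl)
    fix i assume i: "i \<in> {1..s}"
    have rows: "2 * i - 1 \<in> {1..2 * s}" "2 * i \<in> {1..2 * s}" using i by auto
    have idx: "s + 1 + (2 * i - 1) = s + 2 * i" "(2 * i - 1 + 1) div 2 = i" "(2 * i + 1) div 2 = i"
      "odd (2 * i - 1)" using i by auto
    show "(Zopt s (s + 2 * i) 1 + Zopt s (s + 2 * i) (i+1)) / 2
      + (Zopt s (s + 2 * i + 1) 1 - Zopt s (s + 2 * i + 1) (i+1)) / 2 = 1/2 + 1 / (2 * sqrt (real s))"
      using Zopt_lower_left[OF assms rows(1), of 1] Zopt_lower_left[OF assms rows(1), of "i+1"]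
        Zopt_lower_left[OF assms rows(2), of 1] Zopt_lower_left[OF assms rows(2), of "i+1"] idx i
      by (simp add: ev_def alt_sign_def field_simps)
  qed
  also have "\<dots> = real s / 2 + real s / (2 * sqrt (real s))" using assms by (simp add: field_simps)
  also have "real s / (2 * sqrt (real s)) = sqrt (real s) / 2"
    using assms by (simp add: field_simps real_div_sqrt)
  finally show ?thesis by simp
qed

theorem proposition7:
  fixes s :: nat and r :: real
  assumes "s \<ge> 2" and "r > 0" and "r \<ge> real s + 2"
    and "\<forall>u w. u 1 = 1 \<and> sqrt (\<Sum>i\<in>{2..s+1}. (u i)\<^sup>2) \<le> 1 \<and> extreme_pt (Wpoly s) w \<longrightarrow>
               (\<Sum>i\<in>{1..s+1}. (u i)\<^sup>2) + (\<Sum>j\<in>{1..2 * s}. (w j)\<^sup>2) \<le> r"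
  shows "optimal s r (Zopt s) \<and> objective s (Zopt s) = (sqrt (real s) + real s) / 2"
proof -
  have "s \<ge> 1" using assms(1) by simp
  then show ?thesis
    unfolding optimal_def
    using Zopt_feasible[OF _ assms(3)] objective_Zopt objective_le_of_feasible by metis
qed

end
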